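(* Let $\epsilon\le 1/16$ and consider the $(6,3)$-majority algorithm against a late $\epsilon$-bounded adaptive blocking adversary. For any assignment of values to the nodes such that at least $3n/4$ nodes are defined at the end of round $t$, with high probability at least $3n/4$ nodes are defined at the end of round $t+1$.
   Context: Model: $n$ anonymous nodes, fully interconnected, synchronous rounds; in each round every node first receives the non-blocked messages sent to it in the previous round, computes, then sends messages. Late $\epsilon$-bounded adaptive adversary: at the start of each round $t\ge2$ it knows the full system state at the beginning of round $t-1$ and blocks a set of at most $\epsilon n$ nodes in round $t$ (blocked nodes neither send nor receive in that round and know they are blocked); in round 1 it knows the initial state but not that round's coin flips. W.h.p. means with probability at least $1-n^{-\Omega(1)}$. $(k,\ell)$-majority algorithm: each node $u$ has $x_u\in\{0,1,\bot\}$, and $u$ is defined iff $x_u\neq\bot$. In each round: if $u$ received fewer than $\ell$ values from the previous round or is blocked, it sets $x_u:=\bot$ and skips the rest of the round; otherwise it picks $\ell$ of the received values uniformly at random, sets $x_u$ to their majority, and sends $x_u$ to $k$ nodes chosen independently and uniformly at random. *)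

theory Defs
  imports "HOL-Probability.Probability"
begin

text \<open>
  One synchronous round of the (k,l)-majority algorithm on n anonymous nodes 0..n-1.
  A node value is a bool option: None is the undefined value (bot), Some b the bit b.
  A message is identified by its slot (v,i): the i-th message (i < k) sent by node v.
  tgt (v,i) is the receiver chosen (uniformly, independently) for slot (v,i).
\<close>

type_synonym state = "nat \<Rightarrow> bool option"

definition defined_nodes :: "nat \<Rightarrow> state \<Rightarrow> nat set" where
  "defined_nodes n x = {u. u < n \<and> x u \<noteq> None}"

definition received :: "nat \<Rightarrow> nat \<Rightarrow> state \<Rightarrow> (nat \<times> nat \<Rightarrow> nat) \<Rightarrow> nat \<Rightarrow> (nat \<times> nat) set" where
  "received n k x tgt u = {(v, i). v < n \<and> i < k \<and> x v \<noteq> None \<and> tgt (v, i) = u}"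

definition targets_pmf :: "nat \<Rightarrow> nat \<Rightarrow> (nat \<times> nat \<Rightarrow> nat) pmf" where
  "targets_pmf n k = Pi_pmf ({..<n} \<times> {..<k}) 0 (\<lambda>_. pmf_of_set {..<n})"

definition majority_of :: "state \<Rightarrow> (nat \<times> nat) set \<Rightarrow> bool" where
  "majority_of x S = (2 * card {s \<in> S. x (fst s) = Some True} > card S)"

definition active :: "nat \<Rightarrow> nat \<Rightarrow> nat \<Rightarrow> state \<Rightarrow> nat set \<Rightarrow> (nat \<times> nat \<Rightarrow> nat) \<Rightarrow> nat \<Rightarrow> bool" where
  "active n k l x B tgt u = (u \<notin> B \<and> card (received n k x tgt u) \<ge> l)"

definition picks_pmf :: "nat \<Rightarrow> nat \<Rightarrow> nat \<Rightarrow> state \<Rightarrow> nat set \<Rightarrow> (nat \<times> nat \<Rightarrow> nat)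
    \<Rightarrow> (nat \<Rightarrow> (nat \<times> nat) set) pmf" where
  "picks_pmf n k l x B tgt = Pi_pmf {..<n} {}
     (\<lambda>u. if active n k l x B tgt u
          then pmf_of_set {S. S \<subseteq> received n k x tgt u \<and> card S = l}
          else return_pmf {})"

definition new_state :: "nat \<Rightarrow> nat \<Rightarrow> nat \<Rightarrow> state \<Rightarrow> nat set \<Rightarrow> (nat \<times> nat \<Rightarrow> nat)
    \<Rightarrow> (nat \<Rightarrow> (nat \<times> nat) set) \<Rightarrow> state" where
  "new_state n k l x B tgt pick =
     (\<lambda>u. if u < n \<and> active n k l x B tgt u then Some (majority_of x (pick u)) else None)"

text \<open>Distribution of the state at the end of round t+1, given the state x at the end of
  round t (whose messages are sent to random targets) and the blocked set B of round t+1.\<close>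
definition round_pmf :: "nat \<Rightarrow> nat \<Rightarrow> nat \<Rightarrow> state \<Rightarrow> nat set \<Rightarrow> state pmf" where
  "round_pmf n k l x B =
     do { tgt \<leftarrow> targets_pmf n k;
          pick \<leftarrow> picks_pmf n k l x B tgt;
          return_pmf (new_state n k l x B tgt pick) }"

end

(* A node defined at the end of round t sends 6 messages to independent uniform targets, so at
   least 9n/2 messages are in flight and the number of values received by a fixed node is
   Binomial(m, 1/n) with m >= 9n/2; it receives fewer than 3 of them with probability at most
   23/125. Redirecting a single message changes the number of such starved nodes by at most 1,
   so by McDiarmid's inequality this number exceeds its mean by 7n/2000 only with probability
   exp(-Omega(n)). Otherwise at most 3n/16 nodes are starved and at most n/16 are blocked, so
   at least 3n/4 nodes are active, hence defined, after the round. *)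

theory Submission
  imports Defs "HOL-Real_Asymp.Real_Asymp"
begin

section \<open>McDiarmid's inequality for product distributions\<close>

lemma finite_set_Pi_pmf:
  assumes "finite I" "\<And>i. i \<in> I \<Longrightarrow> finite (set_pmf (p i))"
  shows "finite (set_pmf (Pi_pmf I d p))"
  using assms by (simp add: set_Pi_pmf finite_PiE_dflt)

lemma expectation_pair_pmf_finite:
  fixes F :: "'a \<times> 'b \<Rightarrow> real"
  assumes fin_A: "finite (set_pmf A)" and fin_B: "finite (set_pmf B)"
  shows "measure_pmf.expectation (pair_pmf A B) F =
         measure_pmf.expectation A (\<lambda>a. measure_pmf.expectation B (\<lambda>b. F (a, b)))"
proof -
  have inner: "measure_pmf.expectation B (\<lambda>b. F (a, b)) = (\<Sum>b\<in>set_pmf B. F (a, b) * pmf B b)" for a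
    by (rule integral_measure_pmf_real) (auto simp: fin_B)
  have "measure_pmf.expectation (pair_pmf A B) F
      = (\<Sum>x\<in>set_pmf A \<times> set_pmf B. F x * pmf (pair_pmf A B) x)"
    by (rule integral_measure_pmf_real) (auto simp: fin_A fin_B)
  also have "\<dots> = (\<Sum>a\<in>set_pmf A. \<Sum>b\<in>set_pmf B. F (a, b) * pmf B b * pmf A a)"
    unfolding sum.cartesian_product by (auto simp: pmf_pair mult_ac intro!: sum.cong)
  also have "\<dots> = (\<Sum>a\<in>set_pmf A. (\<Sum>b\<in>set_pmf B. F (a, b) * pmf B b) * pmf A a)"
    by (simp add: sum_distrib_right)
  also have "\<dots> = measure_pmf.expectation A (\<lambda>a. measure_pmf.expectation B (\<lambda>b. F (a, b)))"
    unfolding inner by (rule integral_measure_pmf_real[symmetric]) (auto simp: fin_A)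
  finally show ?thesis .
qed

lemma expectation_Pi_pmf_insert:
  fixes F :: "('i \<Rightarrow> 'a) \<Rightarrow> real"
  assumes "finite I" "i \<notin> I" "\<And>j. j \<in> insert i I \<Longrightarrow> finite (set_pmf (p j))"
  shows "measure_pmf.expectation (Pi_pmf (insert i I) d p) F =
         measure_pmf.expectation (p i) (\<lambda>y. measure_pmf.expectation (Pi_pmf I d p) (\<lambda>X. F (X(i := y))))"
proof -
  have "finite (set_pmf (Pi_pmf I d p))" using assms by (intro finite_set_Pi_pmf) auto
  then show ?thesis
    using assms by (simp add: Pi_pmf_insert expectation_pair_pmf_finite case_prod_beta)
qed

lemma Hoeffdings_lemma_pmf:
  fixes h :: "'a \<Rightarrow> real"
  assumes fin: "finite (set_pmf p)" and "t > 0"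
    and diff: "\<And>y y'. y \<in> set_pmf p \<Longrightarrow> y' \<in> set_pmf p \<Longrightarrow> h y - h y' \<le> c"
  shows "measure_pmf.expectation p (\<lambda>y. exp (t * (h y - measure_pmf.expectation p h)))
           \<le> exp (t\<^sup>2 * c\<^sup>2 / 8)"
proof -
  define a where "a = Min (h ` set_pmf p)"
  have range: "h y \<in> {a..a + c}" if "y \<in> set_pmf p" for y
  proof -
    have "a \<in> h ` set_pmf p"
      unfolding a_def using fin set_pmf_not_empty by (intro Min_in) auto
    then obtain y' where y': "y' \<in> set_pmf p" "a = h y'" by auto
    have "a \<le> h y" unfolding a_def using fin that by auto
    then show ?thesis using diff[OF that y'(1)] y'(2) by auto
  qed
  interpret interval_bounded_random_variable p h a "a + c"
    by unfold_locales (use range in \<open>auto simp: AE_measure_pmf_iff\<close>)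
  have "ennreal (measure_pmf.expectation p (\<lambda>y. exp (t * (h y - measure_pmf.expectation p h))))
      = nn_integral p (\<lambda>y. exp (t * (h y - measure_pmf.expectation p h)))"
    by (rule nn_integral_eq_integral[symmetric]) (auto intro: integrable_measure_pmf_finite fin)
  also have "\<dots> \<le> ennreal (exp (t\<^sup>2 * (a + c - a)\<^sup>2 / 8))"
    by (rule Hoeffdings_lemma_nn_integral[OF \<open>t > 0\<close>])
  finally show ?thesis by (simp add: ennreal_le_iff2)
qed

lemma bounded_differences_mgf_Pi_pmf:
  fixes p :: "'i \<Rightarrow> 'a pmf" and f :: "('i \<Rightarrow> 'a) \<Rightarrow> real" and c :: "'i \<Rightarrow> real"
  assumes "finite I" and "\<And>i. i \<in> I \<Longrightarrow> finite (set_pmf (p i))" and "t > 0"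
    and "\<And>i g a b. i \<in> I \<Longrightarrow> f (g(i := a)) - f (g(i := b)) \<le> c i"
  shows "measure_pmf.expectation (Pi_pmf I d p)
           (\<lambda>X. exp (t * (f X - measure_pmf.expectation (Pi_pmf I d p) f)))
         \<le> exp (t\<^sup>2 * (\<Sum>i\<in>I. (c i)\<^sup>2) / 8)"
  using assms(1,2,4)
proof (induction I arbitrary: f rule: finite_induct)
  case empty
  then show ?case by simp
next
  case (insert i I)
  define Q where "Q = Pi_pmf I d p"
  have fin_Q: "finite (set_pmf Q)"
    unfolding Q_def using insert by (intro finite_set_Pi_pmf) auto
  have fin_i: "finite (set_pmf (p i))" using insert by auto
  have expectation_insert: "measure_pmf.expectation (Pi_pmf (insert i I) d p) F =
      measure_pmf.expectation (p i) (\<lambda>y. measure_pmf.expectation Q (\<lambda>X. F (X(i := y))))"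
    for F :: "('i \<Rightarrow> 'a) \<Rightarrow> real"
    unfolding Q_def using insert by (intro expectation_Pi_pmf_insert) auto
  define h where "h y = measure_pmf.expectation Q (\<lambda>X. f (X(i := y)))" for y
  define \<mu> where "\<mu> = measure_pmf.expectation (Pi_pmf (insert i I) d p) f"
  have \<mu>_eq: "\<mu> = measure_pmf.expectation (p i) h"
    unfolding \<mu>_def h_def by (rule expectation_insert)
  have slice: "measure_pmf.expectation Q (\<lambda>X. exp (t * (f (X(i := y)) - h y)))
            \<le> exp (t\<^sup>2 * (\<Sum>j\<in>I. (c j)\<^sup>2) / 8)" for y
  proof -
    have "f ((g(j := a))(i := y)) - f ((g(j := b))(i := y)) \<le> c j" if "j \<in> I" for j g a b
      using insert.prems(2)[of j "g(i := y)" a b] that insert.hyps(2) by (metis fun_upd_twist insertI2)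
    from insert.IH[of "\<lambda>X. f (X(i := y))", OF _ this] insert.prems(1) show ?thesis
      unfolding Q_def h_def by auto
  qed
  have h_diff: "h y - h y' \<le> c i" for y y'
  proof -
    have "h y - h y' = measure_pmf.expectation Q (\<lambda>X. f (X(i := y)) - f (X(i := y')))"
      unfolding h_def
      by (rule Bochner_Integration.integral_diff[symmetric]) (auto intro: integrable_measure_pmf_finite fin_Q)
    also have "\<dots> \<le> measure_pmf.expectation Q (\<lambda>X. c i)"
      by (rule integral_mono) (auto intro: integrable_measure_pmf_finite fin_Q insert.prems(2))
    finally show ?thesis by simp
  qed
  txt \<open>Conditioning on coordinate i: the conditional mean h varies by at most c i, which
    Hoeffding's lemma controls, and every slice is controlled by the induction hypothesis.\<close>
  have "measure_pmf.expectation (Pi_pmf (insert i I) d p) (\<lambda>X. exp (t * (f X - \<mu>)))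
      = measure_pmf.expectation (p i)
          (\<lambda>y. measure_pmf.expectation Q (\<lambda>X. exp (t * (h y - \<mu>)) * exp (t * (f (X(i := y)) - h y))))"
    unfolding expectation_insert by (simp add: algebra_simps flip: exp_add)
  also have "\<dots> \<le> measure_pmf.expectation (p i)
      (\<lambda>y. exp (t * (h y - \<mu>)) * exp (t\<^sup>2 * (\<Sum>j\<in>I. (c j)\<^sup>2) / 8))"
    by (rule integral_mono) (auto intro: integrable_measure_pmf_finite fin_i mult_left_mono slice)
  also have "\<dots> = measure_pmf.expectation (p i) (\<lambda>y. exp (t * (h y - \<mu>)))
      * exp (t\<^sup>2 * (\<Sum>j\<in>I. (c j)\<^sup>2) / 8)"
    by simp
  also have "\<dots> \<le> exp (t\<^sup>2 * (c i)\<^sup>2 / 8) * exp (t\<^sup>2 * (\<Sum>j\<in>I. (c j)\<^sup>2) / 8)"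
    using Hoeffdings_lemma_pmf[OF fin_i \<open>t > 0\<close> h_diff] unfolding \<mu>_eq
    by (intro mult_right_mono) auto
  also have "\<dots> = exp (t\<^sup>2 * (\<Sum>j\<in>insert i I. (c j)\<^sup>2) / 8)"
    using insert.hyps by (simp add: add_divide_distrib algebra_simps flip: exp_add)
  finally show ?case unfolding \<mu>_def .
qed

theorem mcdiarmid_inequality_Pi_pmf:
  fixes p :: "'i \<Rightarrow> 'a pmf" and f :: "('i \<Rightarrow> 'a) \<Rightarrow> real" and c :: "'i \<Rightarrow> real"
  assumes "finite I" and "\<And>i. i \<in> I \<Longrightarrow> finite (set_pmf (p i))" and "s > 0"
    and "\<And>i g a b. i \<in> I \<Longrightarrow> f (g(i := a)) - f (g(i := b)) \<le> c i"
  shows "measure_pmf.prob (Pi_pmf I d p)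
           {X. f X \<ge> measure_pmf.expectation (Pi_pmf I d p) f + s}
         \<le> exp (- 2 * s\<^sup>2 / (\<Sum>i\<in>I. (c i)\<^sup>2))"
proof -
  define M where "M = Pi_pmf I d p"
  define E where "E = measure_pmf.expectation M f"
  define C where "C = (\<Sum>i\<in>I. (c i)\<^sup>2)"
  show ?thesis
  proof (cases "C = 0")
    case True
    then show ?thesis by (simp add: C_def) \<comment> \<open>the bound is exp 0 = 1 since x / 0 = 0\<close>
  next
    case False
    then have "C > 0" unfolding C_def by (simp add: order_neq_le_trans sum_nonneg)
    define t where "t = 4 * s / C"
    have "t > 0" using \<open>C > 0\<close> \<open>s > 0\<close> by (simp add: t_def)
    have fin_M: "finite (set_pmf M)"
      unfolding M_def using assms(1,2) by (rule finite_set_Pi_pmf)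
    have "measure_pmf.prob M {X. f X \<ge> E + s} = measure_pmf.prob M {X \<in> space M. f X - E \<ge> s}"
      by (auto intro: arg_cong[where f = "measure_pmf.prob M"])
    also have "\<dots> \<le> exp (- t * s) * measure_pmf.expectation M (\<lambda>X. exp (t * (f X - E)))"
      unfolding set_integral_space[OF integrable_measure_pmf_finite[OF fin_M], symmetric]
      by (rule measure_pmf.Chernoff_ineq_ge[OF \<open>t > 0\<close>])
         (auto simp: set_integrable_def intro: integrable_measure_pmf_finite fin_M)
    also have "\<dots> \<le> exp (- t * s) * exp (t\<^sup>2 * C / 8)"
      using bounded_differences_mgf_Pi_pmf[where p = p and f = f and c = c and d = d,
          OF assms(1,2) \<open>t > 0\<close> assms(4)]
      unfolding M_def E_def C_def by (intro mult_left_mono) auto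
    also have "\<dots> = exp (- 2 * s\<^sup>2 / C)"
      using \<open>C > 0\<close> by (simp add: t_def power2_eq_square field_simps flip: exp_add)
    finally show ?thesis unfolding M_def E_def C_def .
  qed
qed

section \<open>A lower tail of the binomial distribution\<close>

lemma prob_binomial_pmf_lessThan_le:
  fixes p :: real
  assumes "0 \<le> p" "p < 1"
  shows "measure_pmf.prob (binomial_pmf m p) {..<j}
           \<le> exp (- (m * p)) * (\<Sum>k<j. (m * p) ^ k / fact k) / (1 - p) ^ (j - 1)"
proof -
  have decay: "(1 - p) ^ m \<le> exp (- (m * p))"
  proof -
    have "(1 - p) ^ m \<le> exp (- p) ^ m"
      using exp_ge_add_one_self[of "- p"] assms by (intro power_mono) auto
    also have "\<dots> = exp (- (m * p))" by (simp flip: exp_of_nat_mult)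
    finally show ?thesis .
  qed
  have pmf_le: "pmf (binomial_pmf m p) k \<le> exp (- (m * p)) * ((m * p) ^ k / fact k) / (1 - p) ^ (j - 1)"
    if "k < j" for k
  proof (cases "k \<le> m")
    case False
    then show ?thesis
      using assms by (auto simp: binomial_eq_0 intro!: divide_nonneg_pos mult_nonneg_nonneg)
  next
    case True
    have "real (m choose k) * fact k \<le> real m ^ k"
      using binomial_fact_pow[of m k] by (metis of_nat_fact of_nat_le_iff of_nat_mult of_nat_power)
    then have choose: "real (m choose k) \<le> real m ^ k / fact k"
      by (simp add: pos_le_divide_eq)
    have "(1 - p) ^ (m - k) * (1 - p) ^ (j - 1) \<le> (1 - p) ^ (m - k) * (1 - p) ^ k"
      using assms that by (intro mult_left_mono power_decreasing) auto
    also have "\<dots> = (1 - p) ^ m" using True by (simp flip: power_add)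
    finally have "(1 - p) ^ (m - k) \<le> exp (- (m * p)) / (1 - p) ^ (j - 1)"
      using decay assms by (simp add: pos_le_divide_eq)
    then have "real (m choose k) * p ^ k * (1 - p) ^ (m - k)
        \<le> real m ^ k / fact k * p ^ k * (exp (- (m * p)) / (1 - p) ^ (j - 1))"
      using choose assms by (intro mult_mono) auto
    then show ?thesis using assms by (simp add: power_mult_distrib mult_ac)
  qed
  have "measure_pmf.prob (binomial_pmf m p) {..<j} = (\<Sum>k<j. pmf (binomial_pmf m p) k)"
    by (simp add: measure_measure_pmf_finite)
  also have "\<dots> \<le> (\<Sum>k<j. exp (- (m * p)) * ((m * p) ^ k / fact k) / (1 - p) ^ (j - 1))"
    using pmf_le by (intro sum_mono) auto
  also have "\<dots> = exp (- (m * p)) * (\<Sum>k<j. (m * p) ^ k / fact k) / (1 - p) ^ (j - 1)"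
    by (simp add: sum_distrib_left sum_divide_distrib)
  finally show ?thesis .
qed

lemma poisson_cdf_2_antimono:
  fixes a b :: real
  assumes "a \<le> b"
  shows "exp (- b) * (1 + b + b\<^sup>2 / 2) \<le> exp (- a) * (1 + a + a\<^sup>2 / 2)"
proof (rule DERIV_nonpos_imp_nonincreasing[OF assms])
  fix x :: real
  have "DERIV (\<lambda>x. exp (- x) * (1 + x + x\<^sup>2 / 2)) x :> - exp (- x) * x\<^sup>2 / 2"
    by (rule derivative_eq_intros refl | simp add: power2_eq_square algebra_simps)+
  then show "\<exists>y. DERIV (\<lambda>x. exp (- x) * (1 + x + x\<^sup>2 / 2)) x :> y \<and> y \<le> 0"
    by auto
qed

lemma exp_minus_9_div_2_le: "exp (- (9 / 2)) \<le> (1 / 87 :: real)"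
proof -
  have "(145 / 128 :: real) \<le> exp (1 / 8)"
    using exp_lower_Taylor_quadratic[of "1 / 8 :: real"] by (simp add: power2_eq_square)
  then have "(145 / 128 :: real) ^ 36 \<le> exp (1 / 8) ^ 36" by (intro power_mono) auto
  also have "\<dots> = exp (9 / 2)" by (simp flip: exp_of_nat_mult)
  finally have "87 \<le> exp (9 / 2 :: real)" by (simp add: power_divide)
  then have "1 / exp (9 / 2) \<le> (1 / 87 :: real)" by (intro divide_left_mono) auto
  then show ?thesis by (simp add: exp_minus field_simps)
qed

lemma prob_binomial_pmf_less_3_le:
  assumes n: "n \<ge> 200" and m: "real m \<ge> 9 / 2 * real n"
  shows "measure_pmf.prob (binomial_pmf m (1 / real n)) {..<3} \<le> 23 / 125"
proof -
  define p where "p = 1 / real n"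
  define \<mu> where "\<mu> = real m * p"
  have p: "0 \<le> p" "p \<le> 1 / 200" using n by (auto simp: p_def field_simps)
  have \<mu>: "9 / 2 \<le> \<mu>" using m n by (simp add: \<mu>_def p_def field_simps)
  have "measure_pmf.prob (binomial_pmf m p) {..<3}
      \<le> exp (- \<mu>) * (\<Sum>k<3. \<mu> ^ k / fact k) / (1 - p) ^ (3 - 1)"
    using prob_binomial_pmf_lessThan_le[of p m 3] p unfolding \<mu>_def by simp
  also have "\<dots> = exp (- \<mu>) * (1 + \<mu> + \<mu>\<^sup>2 / 2) / (1 - p)\<^sup>2"
    by (simp add: eval_nat_numeral power2_eq_square)
  also have "\<dots> \<le> exp (- (9 / 2)) * (1 + 9 / 2 + (9 / 2)\<^sup>2 / 2) / (1 - p)\<^sup>2"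
    using poisson_cdf_2_antimono[OF \<mu>] by (rule divide_right_mono) simp
  also have "\<dots> \<le> exp (- (9 / 2)) * (1 + 9 / 2 + (9 / 2)\<^sup>2 / 2) / (199 / 200)\<^sup>2"
    using p by (intro divide_left_mono power_mono) auto
  also have "\<dots> \<le> 1 / 87 * (1 + 9 / 2 + (9 / 2)\<^sup>2 / 2) / (199 / 200)\<^sup>2"
    using exp_minus_9_div_2_le by (intro divide_right_mono mult_right_mono) auto
  also have "\<dots> \<le> 23 / 125" by (simp add: power2_eq_square)
  finally show ?thesis unfolding p_def .
qed

section \<open>One round of the majority algorithm\<close>

definition starved :: "nat \<Rightarrow> nat \<Rightarrow> nat \<Rightarrow> state \<Rightarrow> (nat \<times> nat \<Rightarrow> nat) \<Rightarrow> nat set" where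
  "starved n k l x tgt = {u. u < n \<and> card (received n k x tgt u) < l}"

lemma received_eq: "received n k x tgt u = {s \<in> defined_nodes n x \<times> {..<k}. tgt s = u}"
  unfolding received_def defined_nodes_def by auto

lemma finite_received: "finite (received n k x tgt u)"
  unfolding received_eq by (simp add: defined_nodes_def)

lemma finite_set_targets_pmf: "finite (set_pmf (targets_pmf n k))"
  unfolding targets_pmf_def
proof (intro finite_set_Pi_pmf)
  fix i assume "i \<in> {..<n} \<times> {..<k}"
  then have "{..<n} \<noteq> {}" by auto
  then show "finite (set_pmf (pmf_of_set {..<n}))" by simp
qed simp

lemma card_starved_fun_upd_le:
  "card (starved n k l x (g(s := a))) \<le> card (starved n k l x (g(s := b))) + 1"
proof -
  have "starved n k l x (g(s := a)) \<subseteq> insert b (starved n k l x (g(s := b)))"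
  proof
    fix u assume u: "u \<in> starved n k l x (g(s := a))"
    show "u \<in> insert b (starved n k l x (g(s := b)))"
    proof (cases "u = b")
      case False
      then have "received n k x (g(s := b)) u \<subseteq> received n k x (g(s := a)) u"
        unfolding received_def by auto
      then have "card (received n k x (g(s := b)) u) \<le> card (received n k x (g(s := a)) u)"
        by (intro card_mono finite_received)
      then show ?thesis using u unfolding starved_def by auto
    qed simp
  qed
  then have "card (starved n k l x (g(s := a))) \<le> card (insert b (starved n k l x (g(s := b))))"
    by (intro card_mono) (auto simp: starved_def)
  also have "\<dots> \<le> card (starved n k l x (g(s := b))) + 1"
    by (simp add: card_insert_le_m1 starved_def)
  finally show ?thesis .
qed

lemma card_active_ge:
  assumes "finite B"
  shows "n \<le> card {u. u < n \<and> active n k l x B tgt u} + card B + card (starved n k l x tgt)"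
proof -
  have "{..<n} \<subseteq> {u. u < n \<and> active n k l x B tgt u} \<union> B \<union> starved n k l x tgt"
    unfolding active_def starved_def by auto
  then have "card {..<n} \<le> card ({u. u < n \<and> active n k l x B tgt u} \<union> B \<union> starved n k l x tgt)"
    using assms by (intro card_mono) (auto simp: starved_def)
  also have "\<dots> \<le> card {u. u < n \<and> active n k l x B tgt u} + card B + card (starved n k l x tgt)"
    by (intro order.trans[OF card_Un_le] add_mono order.refl card_Un_le)
  finally show ?thesis by simp
qed

lemma prob_round_pmf_card_defined_nodes:
  "measure_pmf.prob (round_pmf n k l x B) {y. P (card (defined_nodes n y))}
   = measure_pmf.prob (targets_pmf n k) {tgt. P (card {u. u < n \<and> active n k l x B tgt u})}"
proof -
  define A where "A tgt = {u. u < n \<and> active n k l x B tgt u}" for tgt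
  have "defined_nodes n (new_state n k l x B tgt pick) = A tgt" for tgt pick
    unfolding defined_nodes_def new_state_def A_def by auto
  then have "map_pmf (defined_nodes n) (round_pmf n k l x B)
      = targets_pmf n k \<bind> (\<lambda>tgt. picks_pmf n k l x B tgt \<bind> (\<lambda>_. return_pmf (A tgt)))"
    unfolding round_pmf_def by (simp add: map_bind_pmf)
  also have "\<dots> = map_pmf A (targets_pmf n k)"
    by (simp add: map_pmf_def)
  finally have "map_pmf (defined_nodes n) (round_pmf n k l x B) = map_pmf A (targets_pmf n k)" .
  then have "measure_pmf.prob (map_pmf (defined_nodes n) (round_pmf n k l x B)) {D. P (card D)}
       = measure_pmf.prob (map_pmf A (targets_pmf n k)) {D. P (card D)}" by simp
  then show ?thesis unfolding A_def by (simp add: vimage_def)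
qed

lemma map_pmf_of_set_eq_bernoulli_pmf:
  assumes "u < n"
  shows "map_pmf (\<lambda>a. a = u) (pmf_of_set {..<n}) = bernoulli_pmf (1 / real n)"
proof (rule pmf_eqI)
  fix b :: bool
  have ne: "{..<n} \<noteq> {}" using assms by auto
  show "pmf (map_pmf (\<lambda>a. a = u) (pmf_of_set {..<n})) b = pmf (bernoulli_pmf (1 / real n)) b"
  proof (cases b)
    case True
    have "{..<n} \<inter> (\<lambda>a. a = u) -` {True} = {u}" using assms by auto
    then show ?thesis using True assms unfolding pmf_map measure_pmf_of_set[OF ne finite_lessThan]
      by simp
  next
    case False
    have "{..<n} \<inter> (\<lambda>a. a = u) -` {False} = {..<n} - {u}" by auto
    then have "card ({..<n} \<inter> (\<lambda>a. a = u) -` {False}) = n - 1" using assms by simp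
    then show ?thesis using False assms unfolding pmf_map measure_pmf_of_set[OF ne finite_lessThan]
      by (simp add: of_nat_diff field_simps)
  qed
qed

lemma card_received_binomial:
  assumes "u < n"
  shows "map_pmf (\<lambda>tgt. card (received n k x tgt u)) (targets_pmf n k)
         = binomial_pmf (card (defined_nodes n x) * k) (1 / real n)"
proof -
  define A where "A = {..<n} \<times> {..<k}"
  define S where "S = defined_nodes n x \<times> {..<k}"
  have "finite A" unfolding A_def by auto
  have "S \<subseteq> A" unfolding S_def A_def defined_nodes_def by auto
  have "map_pmf (\<lambda>tgt. card (received n k x tgt u)) (targets_pmf n k)
      = map_pmf (\<lambda>g. card {s\<in>S. g s})
          (map_pmf (\<lambda>h. (\<lambda>a. a = u) \<circ> h) (Pi_pmf A 0 (\<lambda>_. pmf_of_set {..<n})))"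
    unfolding targets_pmf_def map_pmf_comp A_def S_def received_eq by (simp add: o_def)
  also have "map_pmf (\<lambda>h. (\<lambda>a. a = u) \<circ> h) (Pi_pmf A 0 (\<lambda>_. pmf_of_set {..<n}))
      = Pi_pmf A (0 = u) (\<lambda>_. bernoulli_pmf (1 / real n))"
    using \<open>finite A\<close> map_pmf_of_set_eq_bernoulli_pmf[OF assms] by (simp flip: Pi_pmf_map)
  also have "map_pmf (\<lambda>g. card {s\<in>S. g s}) \<dots>
      = map_pmf (\<lambda>g. card {s\<in>S. g s})
          (map_pmf (\<lambda>f s. if s \<in> S then f s else (0 = u)) (Pi_pmf A (0 = u) (\<lambda>_. bernoulli_pmf (1 / real n))))"
    unfolding map_pmf_comp by (intro map_pmf_cong refl) (auto intro!: arg_cong[where f = card])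
  also have "\<dots> = map_pmf (\<lambda>g. card {s\<in>S. g s}) (Pi_pmf S (0 = u) (\<lambda>_. bernoulli_pmf (1 / real n)))"
    by (subst Pi_pmf_subset[OF \<open>finite A\<close> \<open>S \<subseteq> A\<close>]) simp
  also have "\<dots> = binomial_pmf (card S) (1 / real n)"
    using \<open>finite A\<close> \<open>S \<subseteq> A\<close> assms
    by (intro binomial_pmf_altdef'[symmetric]) (auto intro: finite_subset)
  finally show ?thesis unfolding S_def by (simp add: card_cartesian_product)
qed

lemma expectation_card_starved:
  "measure_pmf.expectation (targets_pmf n k) (\<lambda>tgt. real (card (starved n k l x tgt)))
   = real n * measure_pmf.prob (binomial_pmf (card (defined_nodes n x) * k) (1 / real n)) {..<l}"
proof -
  define T where "T = targets_pmf n k"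
  define E where "E u = {tgt. card (received n k x tgt u) < l}" for u
  have card_starved: "real (card (starved n k l x tgt)) = (\<Sum>u<n. indicator (E u) tgt)" for tgt
  proof -
    have "starved n k l x tgt = {..<n} \<inter> {u. tgt \<in> E u}"
      unfolding starved_def E_def by auto
    then show ?thesis by (simp add: indicator_def)
  qed
  have "measure_pmf.prob T (E u)
      = measure_pmf.prob (binomial_pmf (card (defined_nodes n x) * k) (1 / real n)) {..<l}"
    if "u < n" for u
  proof -
    have "measure_pmf.prob T (E u)
        = measure_pmf.prob (map_pmf (\<lambda>tgt. card (received n k x tgt u)) T) {..<l}"
      by (simp add: E_def vimage_def lessThan_def)
    then show ?thesis unfolding T_def card_received_binomial[OF that] .
  qed
  then have "measure_pmf.expectation T (\<lambda>tgt. real (card (starved n k l x tgt)))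
      = (\<Sum>u<n. measure_pmf.prob (binomial_pmf (card (defined_nodes n x) * k) (1 / real n)) {..<l})"
    unfolding card_starved T_def
    by (subst Bochner_Integration.integral_sum)
       (auto intro: integrable_measure_pmf_finite finite_set_targets_pmf)
  then show ?thesis unfolding T_def by simp
qed

lemma prob_card_starved_ge_expectation_plus:
  assumes "s > 0"
  shows "measure_pmf.prob (targets_pmf n k)
           {tgt. measure_pmf.expectation (targets_pmf n k) (\<lambda>tgt. real (card (starved n k l x tgt))) + s
                 \<le> real (card (starved n k l x tgt))}
         \<le> exp (- 2 * s\<^sup>2 / (real n * real k))"
proof -
  have "measure_pmf.prob (targets_pmf n k)
          {tgt. measure_pmf.expectation (targets_pmf n k) (\<lambda>tgt. real (card (starved n k l x tgt))) + s
                \<le> real (card (starved n k l x tgt))}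
        \<le> exp (- 2 * s\<^sup>2 / (\<Sum>i\<in>{..<n} \<times> {..<k}. 1\<^sup>2))"
    unfolding targets_pmf_def
  proof (rule mcdiarmid_inequality_Pi_pmf)
    fix i assume "i \<in> {..<n} \<times> {..<k}"
    then have "{..<n} \<noteq> {}" by auto
    then show "finite (set_pmf (pmf_of_set {..<n}))" by simp
  next
    show "real (card (starved n k l x (g(i := a)))) - real (card (starved n k l x (g(i := b)))) \<le> 1"
      for i g a b using card_starved_fun_upd_le[of n k l x g i a b] by simp
  qed (use assms in auto)
  then show ?thesis by simp
qed

lemma prob_round_pmf_6_3_defined_ge:
  assumes n: "n \<ge> 200"
    and defined: "3 * real n / 4 \<le> real (card (defined_nodes n x))"
    and B: "B \<subseteq> {..<n}" "real (card B) \<le> real n / 16"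
  shows "1 - exp (- (49 / 12000000) * real n)
         \<le> measure_pmf.prob (round_pmf n 6 3 x B) {y. 3 * real n / 4 \<le> real (card (defined_nodes n y))}"
proof -
  define T where "T = targets_pmf n 6"
  define Z where "Z tgt = real (card (starved n 6 3 x tgt))" for tgt
  define s where "s = 7 * real n / 2000" \<comment> \<open>23/125 + 7/2000 = 3/16\<close>
  define bad where "bad = {tgt. measure_pmf.expectation T Z + s \<le> Z tgt}"
  have EZ: "measure_pmf.expectation T Z \<le> 23 / 125 * real n"
  proof -
    have "9 / 2 * real n \<le> real (card (defined_nodes n x) * 6)" using defined by simp
    from mult_left_mono[OF prob_binomial_pmf_less_3_le[OF n this], of "real n"] show ?thesis
      unfolding T_def Z_def expectation_card_starved by (simp add: mult.commute)
  qed
  have "s > 0" using n by (simp add: s_def)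
  then have "measure_pmf.prob T bad \<le> exp (- 2 * s\<^sup>2 / (real n * real 6))"
    unfolding bad_def T_def Z_def by (rule prob_card_starved_ge_expectation_plus)
  also have "\<dots> = exp (- (49 / 12000000) * real n)"
    using n by (simp add: s_def power2_eq_square field_simps)
  finally have bad_small: "measure_pmf.prob T bad \<le> exp (- (49 / 12000000) * real n)" .
  have good: "- bad \<subseteq> {tgt. 3 * real n / 4 \<le> real (card {u. u < n \<and> active n 6 3 x B tgt u})}"
  proof
    fix tgt assume "tgt \<in> - bad"
    then have Z: "Z tgt \<le> 3 * real n / 16" using EZ unfolding bad_def s_def by auto
    have "n \<le> card {u. u < n \<and> active n 6 3 x B tgt u} + card B + card (starved n 6 3 x tgt)"
      using finite_subset[OF B(1) finite_lessThan] by (rule card_active_ge)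
    then have "real n \<le> real (card {u. u < n \<and> active n 6 3 x B tgt u}) + real (card B) + Z tgt"
      unfolding Z_def by (metis of_nat_add of_nat_le_iff)
    then show "tgt \<in> {tgt. 3 * real n / 4 \<le> real (card {u. u < n \<and> active n 6 3 x B tgt u})}"
      using Z B(2) by simp
  qed
  have "1 - exp (- (49 / 12000000) * real n) \<le> measure_pmf.prob T (- bad)"
    using bad_small measure_pmf.prob_compl[of bad T] by (simp add: Compl_eq_Diff_UNIV)
  also have "\<dots> \<le> measure_pmf.prob T {tgt. 3 * real n / 4 \<le> real (card {u. u < n \<and> active n 6 3 x B tgt u})}"
    using good by (intro measure_pmf.finite_measure_mono) auto
  finally show ?thesis
    unfolding T_def prob_round_pmf_card_defined_nodes[where P = "\<lambda>c. 3 * real n / 4 \<le> real c"] .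
qed

theorem lemma2:
  fixes \<epsilon> :: real
  assumes "\<epsilon> \<le> 1/16"
  shows "\<exists>c>0. \<exists>N. \<forall>n\<ge>N. \<forall>(x :: state) (B :: nat set).
           real (card (defined_nodes n x)) \<ge> 3 * real n / 4 \<longrightarrow>
           B \<subseteq> {..<n} \<longrightarrow> real (card B) \<le> \<epsilon> * real n \<longrightarrow>
           measure_pmf.prob (round_pmf n 6 3 x B)
             {y. real (card (defined_nodes n y)) \<ge> 3 * real n / 4}
           \<ge> 1 - real n powr (- c)"
proof -
  have "\<forall>\<^sub>F n in sequentially. exp (- (49 / 12000000) * real n) \<le> real n powr (- 1)"
    by real_asymp
  then obtain N where N: "\<And>n. n \<ge> N \<Longrightarrow> exp (- (49 / 12000000) * real n) \<le> real n powr (- 1)"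
    unfolding eventually_sequentially by blast
  have "1 - real n powr (- 1)
        \<le> measure_pmf.prob (round_pmf n 6 3 x B) {y. 3 * real n / 4 \<le> real (card (defined_nodes n y))}"
    if "n \<ge> max N 200" "3 * real n / 4 \<le> real (card (defined_nodes n x))"
      "B \<subseteq> {..<n}" "real (card B) \<le> \<epsilon> * real n" for n x B
  proof -
    have "real (card B) \<le> real n / 16"
      using that(4) mult_right_mono[OF assms, of "real n"] by simp
    then show ?thesis
      using prob_round_pmf_6_3_defined_ge[of n x B] N[of n] that(1-3) by simp
  qed
  then show ?thesis by (intro exI[of _ "1 :: real"] conjI exI[of _ "max N 200"]) auto
qed

end
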